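(* Let $(X_{m,t})$ be a random array in $\Omega^{M\times(T+1)}$ whose rows are independent, each row $m$ being a Markov chain with transition matrix $P_m$, and fix $i\in\Omega$. With the notation of the context, the $\mathbb R^{1\times|\Omega|}$-valued process $k\mapsto\bar V_{k,i,:}$, $k=0,\dots,K$, is a martingale with respect to the filtration $(\mathcal F_0,\mathcal F_1,\dots)$, and its increments satisfy $\|\bar U_{k,i,:}\|_2\le\sqrt2$ almost surely for all $k$.
   Context: $\Omega$ finite, $M,T\ge1$, rows $m=1,\dots,M$, columns $t=0,\dots,T$. Write $X^{(i)}_{m,t}=1(X_{m,t}=i)$ and $P_{m,i,j}=P_m(i,j)$. Define $U_{m,0,i,j}=0$ and $U_{m,t,i,j}=X^{(i)}_{m,t-1}(X^{(j)}_{m,t}-P_{m,i,j})$ for $t\ge1$. Let $K=M(T+1)$ and use the bijection $(m,t)\mapsto k=m+tM$ from $\{1,\dots,M\}\times\{0,\dots,T\}$ onto $\{1,\dots,K\}$ (column-stacking vectorisation); set $\bar U_{k,i,j}=U_{m,t,i,j}$ and $\bar X_k=X_{m,t}$ for $k=m+tM$. Let $\bar V_{k,i,j}=\sum_{k'=1}^k\bar U_{k',i,j}$ for $k=0,\dots,K$ (empty sum $=0$), and $\mathcal F_k=\sigma(\bar X_1,\dots,\bar X_k)$. *)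

theory Defs
  imports "HOL-Probability.Probability"
begin

definition markov_chain_row ::
  "'w measure \<Rightarrow> (nat \<Rightarrow> 'w \<Rightarrow> 'a::finite) \<Rightarrow> ('a \<Rightarrow> 'a \<Rightarrow> real) \<Rightarrow> nat \<Rightarrow> bool" where
  "markov_chain_row Ps Y Q T \<longleftrightarrow>
     (\<forall>x y. 0 \<le> Q x y) \<and> (\<forall>x. (\<Sum>y\<in>UNIV. Q x y) = 1) \<and>
     (\<forall>t<T. \<forall>xs y.
        measure Ps {\<omega>\<in>space Ps. (\<forall>s\<le>t. Y s \<omega> = xs s) \<and> Y (Suc t) \<omega> = y}
        = measure Ps {\<omega>\<in>space Ps. \<forall>s\<le>t. Y s \<omega> = xs s} * Q (xs t) y)"

definition U ::
  "(nat \<Rightarrow> 'a \<Rightarrow> 'a \<Rightarrow> real) \<Rightarrow> (nat \<Rightarrow> nat \<Rightarrow> 'w \<Rightarrow> 'a) \<Rightarrow> nat \<Rightarrow> nat \<Rightarrow> 'a \<Rightarrow> 'a \<Rightarrow> 'w \<Rightarrow> real" where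
  "U P X m t i j \<omega> =
     (if t = 0 then 0
      else of_bool (X m (t - 1) \<omega> = i) * (of_bool (X m t \<omega> = j) - P m i j))"

text \<open>Inverse of the bijection (m,t) \<mapsto> k = m + t M (k \<ge> 1): m = ((k-1) mod M) + 1, t = (k-1) div M.\<close>
definition row_of :: "nat \<Rightarrow> nat \<Rightarrow> nat" where
  "row_of M k = Suc ((k - 1) mod M)"

definition col_of :: "nat \<Rightarrow> nat \<Rightarrow> nat" where
  "col_of M k = (k - 1) div M"

definition Xbar :: "nat \<Rightarrow> (nat \<Rightarrow> nat \<Rightarrow> 'w \<Rightarrow> 'a) \<Rightarrow> nat \<Rightarrow> 'w \<Rightarrow> 'a" where
  "Xbar M X k = X (row_of M k) (col_of M k)"

definition Ubar ::
  "nat \<Rightarrow> (nat \<Rightarrow> 'a \<Rightarrow> 'a \<Rightarrow> real) \<Rightarrow> (nat \<Rightarrow> nat \<Rightarrow> 'w \<Rightarrow> 'a) \<Rightarrow> nat \<Rightarrow> 'a \<Rightarrow> 'a \<Rightarrow> 'w \<Rightarrow> real" where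
  "Ubar M P X k i j = U P X (row_of M k) (col_of M k) i j"

definition Vbar ::
  "nat \<Rightarrow> (nat \<Rightarrow> 'a \<Rightarrow> 'a \<Rightarrow> real) \<Rightarrow> (nat \<Rightarrow> nat \<Rightarrow> 'w \<Rightarrow> 'a) \<Rightarrow> nat \<Rightarrow> 'a \<Rightarrow> 'a \<Rightarrow> 'w \<Rightarrow> real" where
  "Vbar M P X k i j \<omega> = (\<Sum>k'\<in>{1..k}. Ubar M P X k' i j \<omega>)"

definition Fk :: "'w measure \<Rightarrow> nat \<Rightarrow> (nat \<Rightarrow> nat \<Rightarrow> 'w \<Rightarrow> 'a) \<Rightarrow> nat \<Rightarrow> 'w measure" where
  "Fk Ps M X k = sigma (space Ps) (\<Union>j\<in>{1..k}. {Xbar M X j -` A \<inter> space Ps | A. True})"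

definition martingale_upto ::
  "'w measure \<Rightarrow> (nat \<Rightarrow> 'w measure) \<Rightarrow> (nat \<Rightarrow> 'w \<Rightarrow> real) \<Rightarrow> nat \<Rightarrow> bool" where
  "martingale_upto Ps F V K \<longleftrightarrow>
     (\<forall>k\<le>K. subalgebra Ps (F k)) \<and>
     (\<forall>k<K. sets (F k) \<subseteq> sets (F (Suc k))) \<and>
     (\<forall>k\<le>K. V k \<in> borel_measurable (F k) \<and> integrable Ps (V k)) \<and>
     (\<forall>k<K. AE \<omega> in Ps. real_cond_exp Ps (F k) (V (Suc k)) \<omega> = V k \<omega>)"

definition vec_martingale_upto ::
  "'w measure \<Rightarrow> (nat \<Rightarrow> 'w measure) \<Rightarrow> (nat \<Rightarrow> 'a \<Rightarrow> 'w \<Rightarrow> real) \<Rightarrow> nat \<Rightarrow> bool" where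
  "vec_martingale_upto Ps F V K \<longleftrightarrow> (\<forall>j. martingale_upto Ps F (\<lambda>k. V k j) K)"

end

theory Submission
  imports Defs
begin

text \<open>
  In the column-stacking order the increment \<open>Ubar k\<close> with \<open>k = m + t M\<close>, \<open>t \<ge> 1\<close>, involves only
  \<open>X m (t - 1) = Xbar (k - M)\<close>, which is already \<open>F (k - 1)\<close>-measurable, and \<open>X m t = Xbar k\<close>.
  As \<open>F (k - 1)\<close> is generated by finitely many variables with finite range, the martingale
  property reduces to \<open>Ubar k\<close> having integral zero over every atom
  \<open>{Xbar 1 = v 1, \<dots>, Xbar (k - 1) = v (k - 1)}\<close>. By independence of the rows the probability
  of an atom is a product of cylinder probabilities of the single rows, and imposing
  additionally \<open>X m t = b\<close> changes only the factor of row \<open>m\<close>, by the Markov factor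
  \<open>P m (v (k - M)) b\<close>. So on an atom with \<open>v (k - M) = i\<close> the integral of \<open>Ubar k\<close> is
  \<open>prob atom * (P m i j - P m i j) = 0\<close>. The norm bound holds because
  \<open>(\<delta> x j - p j)\<^sup>2 \<le> \<delta> x j + p j\<close> for a probability vector \<open>p\<close>, and the right-hand side sums to 2.
\<close>

definition atom :: "'w set \<Rightarrow> ('j \<Rightarrow> 'w \<Rightarrow> 'a) \<Rightarrow> 'j set \<Rightarrow> ('j \<Rightarrow> 'a) \<Rightarrow> 'w set" where
  "atom \<Omega> Y J v = {\<omega>\<in>\<Omega>. \<forall>j\<in>J. Y j \<omega> = v j}"

lemma atom_subset_or_disjoint:
  assumes "S \<in> sigma_sets \<Omega> (\<Union>j\<in>J. {Y j -` A \<inter> \<Omega> | A. True})"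
  shows "atom \<Omega> Y J v \<subseteq> S \<or> atom \<Omega> Y J v \<inter> S = {}"
  using assms
proof induction
  case (Basic S)
  then obtain j A where "j \<in> J" "S = Y j -` A \<inter> \<Omega>" by auto
  then show ?case by (cases "v j \<in> A") (auto simp: atom_def)
next
  case (Compl S)
  then show ?case by (auto simp: atom_def)
next
  case (Union S)
  show ?case
  proof (cases "\<exists>n. atom \<Omega> Y J v \<subseteq> S n")
    case False
    then have "\<forall>n. atom \<Omega> Y J v \<inter> S n = {}" using Union.IH by blast
    then show ?thesis by blast
  qed blast
qed simp

lemma sets_atom:
  assumes "finite J" "\<And>j. j \<in> J \<Longrightarrow> Y j \<in> measurable N (count_space UNIV)"
  shows "atom (space N) Y J v \<in> sets N"
proof -
  have "{\<omega>\<in>space N. Y j \<omega> = v j} \<in> sets N" if "j \<in> J" for j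
  proof -
    note [measurable] = assms(2)[OF that]
    show ?thesis by measurable
  qed
  then show ?thesis
    unfolding atom_def using assms(1) by (rule sets.sets_Collect_finite_All)
qed

lemma indicator_eq_sum_atoms:
  fixes Y :: "'j \<Rightarrow> 'w \<Rightarrow> 'a::finite"
  assumes "finite J" "S \<in> sigma_sets \<Omega> (\<Union>j\<in>J. {Y j -` A \<inter> \<Omega> | A. True})" "\<omega> \<in> \<Omega>"
  shows "indicator S \<omega> = (\<Sum>v\<in>{v \<in> PiE J (\<lambda>_. UNIV). atom \<Omega> Y J v \<subseteq> S}. indicator (atom \<Omega> Y J v) \<omega> :: real)"
proof -
  define v\<^sub>0 where "v\<^sub>0 = restrict (\<lambda>j. Y j \<omega>) J"
  have atom_iff: "\<omega> \<in> atom \<Omega> Y J v \<longleftrightarrow> v = v\<^sub>0" if "v \<in> PiE J (\<lambda>_. UNIV)" for v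
    using that \<open>\<omega> \<in> \<Omega>\<close> by (auto simp: atom_def v\<^sub>0_def PiE_def extensional_def fun_eq_iff)
  have "\<omega> \<in> S \<longleftrightarrow> atom \<Omega> Y J v\<^sub>0 \<subseteq> S"
    using atom_subset_or_disjoint[OF assms(2), of v\<^sub>0] atom_iff[of v\<^sub>0] by (auto simp: v\<^sub>0_def)
  then show ?thesis
    using \<open>finite J\<close> by (simp add: indicator_def atom_iff finite_PiE v\<^sub>0_def if_distrib sum.If_cases)
qed

lemma (in prob_space) integral_indicator_zero_if_atoms:
  fixes Y :: "'j \<Rightarrow> 'a \<Rightarrow> 'b::finite" and f :: "'a \<Rightarrow> real"
  assumes "finite J" and Y: "\<And>j. j \<in> J \<Longrightarrow> Y j \<in> measurable M (count_space UNIV)"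
    and S: "S \<in> sigma_sets (space M) (\<Union>j\<in>J. {Y j -` A \<inter> space M | A. True})"
    and f: "integrable M f"
    and atoms: "\<And>v. (\<integral>\<omega>. indicator (atom (space M) Y J v) \<omega> * f \<omega> \<partial>M) = 0"
  shows "(\<integral>\<omega>. indicator S \<omega> * f \<omega> \<partial>M) = 0"
proof -
  let ?V = "{v \<in> PiE J (\<lambda>_. UNIV). atom (space M) Y J v \<subseteq> S}"
  have "(\<integral>\<omega>. indicator S \<omega> * f \<omega> \<partial>M)
      = (\<integral>\<omega>. (\<Sum>v\<in>?V. indicator (atom (space M) Y J v) \<omega> * f \<omega>) \<partial>M)"
    using indicator_eq_sum_atoms[OF \<open>finite J\<close> S]
    by (intro Bochner_Integration.integral_cong) (simp_all add: sum_distrib_right)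
  also have "\<dots> = (\<Sum>v\<in>?V. \<integral>\<omega>. indicator (atom (space M) Y J v) \<omega> * f \<omega> \<partial>M)"
    using integrable_mult_indicator[OF sets_atom[OF \<open>finite J\<close> Y] f]
    by (intro Bochner_Integration.integral_sum) simp
  finally show ?thesis by (simp add: atoms)
qed

lemma (in prob_space) martingale_upto_of_increments:
  assumes sub: "\<And>k. k \<le> K \<Longrightarrow> subalgebra M (F k)"
    and mono: "\<And>k. k < K \<Longrightarrow> sets (F k) \<subseteq> sets (F (Suc k))"
    and adapted: "\<And>k. k \<le> K \<Longrightarrow> V k \<in> borel_measurable (F k)"
    and int: "\<And>k. k \<le> K \<Longrightarrow> integrable M (V k)"
    and incr: "\<And>k A. k < K \<Longrightarrow> A \<in> sets (F k) \<Longrightarrow>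
                 (\<integral>\<omega>. indicator A \<omega> * (V (Suc k) \<omega> - V k \<omega>) \<partial>M) = 0"
  shows "martingale_upto M F V K"
  unfolding martingale_upto_def
proof (intro conjI allI impI sub mono adapted int)
  fix k assume k: "k < K"
  interpret F: finite_measure_subalgebra M "F k"
    using sub[of k] k by unfold_locales auto
  show "AE \<omega> in M. real_cond_exp M (F k) (V (Suc k)) \<omega> = V k \<omega>"
  proof (rule F.real_cond_exp_charact)
    fix A assume A: "A \<in> sets (F k)"
    then have "A \<in> sets M" using sub[of k] k by (auto simp: subalgebra_def)
    then have "integrable M (\<lambda>\<omega>. indicator A \<omega> * V j \<omega>)" if "j \<le> K" for j
      using integrable_mult_indicator[OF _ int[OF that]] by simp
    then show "(\<integral>\<omega>\<in>A. V (Suc k) \<omega> \<partial>M) = (\<integral>\<omega>\<in>A. V k \<omega> \<partial>M)"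
      using incr[OF k A] k unfolding set_lebesgue_integral_def
      by (simp add: right_diff_distrib)
  qed (use k in \<open>auto intro: int adapted\<close>)
qed

lemma (in prob_space) prob_cylinder_indep_rows:
  fixes Z :: "'r \<Rightarrow> 't \<Rightarrow> 'a \<Rightarrow> 'b"
  assumes indep: "indep_vars (\<lambda>_. Pi\<^sub>M I (\<lambda>_. count_space UNIV)) (\<lambda>r \<omega>. \<lambda>t\<in>I. Z r t \<omega>) R"
    and "finite I" "finite R" and D: "\<And>r. r \<in> R \<Longrightarrow> D r \<subseteq> I"
  shows "prob {\<omega>\<in>space M. \<forall>r\<in>R. \<forall>s\<in>D r. Z r s \<omega> = w r s}
       = (\<Prod>r\<in>R. prob {\<omega>\<in>space M. \<forall>s\<in>D r. Z r s \<omega> = w r s})"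
proof (cases "R = {}")
  case False
  define E where "E r = {\<omega>\<in>space M. \<forall>s\<in>D r. Z r s \<omega> = w r s}" for r
  have "E r = (\<lambda>\<omega>. \<lambda>t\<in>I. Z r t \<omega>) -` (\<Pi>\<^sub>E s\<in>I. if s \<in> D r then {w r s} else UNIV) \<inter> space M"
    if "r \<in> R" for r
    using D[OF that] by (auto simp: E_def PiE_iff split: if_splits)
  moreover have "(\<Pi>\<^sub>E s\<in>I. if s \<in> D r then {w r s} else UNIV) \<in> sets (Pi\<^sub>M I (\<lambda>_. count_space UNIV))"
    for r using \<open>finite I\<close> by (intro sets_PiM_I_finite) auto
  ultimately have "prob (\<Inter>r\<in>R. E r) = (\<Prod>r\<in>R. prob (E r))"
    using indep \<open>finite R\<close> False unfolding indep_vars_def2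
    by (intro indep_setsD[of _ R]) auto
  moreover have "(\<Inter>r\<in>R. E r) = {\<omega>\<in>space M. \<forall>r\<in>R. \<forall>s\<in>D r. Z r s \<omega> = w r s}"
    using False by (auto simp: E_def)
  ultimately show ?thesis by (simp add: E_def)
qed (simp add: prob_space)

lemma markov_chain_row_prob_extend:
  assumes "markov_chain_row N Y Q T" "t < T"
  shows "measure N {\<omega>\<in>space N. \<forall>s\<le>Suc t. Y s \<omega> = xs s}
       = measure N {\<omega>\<in>space N. \<forall>s\<le>t. Y s \<omega> = xs s} * Q (xs t) (xs (Suc t))"
proof -
  have "{\<omega>\<in>space N. \<forall>s\<le>Suc t. Y s \<omega> = xs s}
      = {\<omega>\<in>space N. (\<forall>s\<le>t. Y s \<omega> = xs s) \<and> Y (Suc t) \<omega> = xs (Suc t)}"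
    by (auto simp: le_Suc_eq)
  then show ?thesis using assms unfolding markov_chain_row_def by simp
qed

lemma sum_square_delta_minus_distribution_le_2:
  fixes p :: "'a::finite \<Rightarrow> real"
  assumes nonneg: "\<And>y. 0 \<le> p y" and sum1: "(\<Sum>y\<in>UNIV. p y) = 1"
  shows "(\<Sum>j\<in>UNIV. (of_bool (x = j) - p j)\<^sup>2) \<le> 2"
proof -
  have le1: "p j \<le> 1" for j
    using member_le_sum[of j UNIV p] nonneg sum1 by auto
  have "(of_bool (x = j) - p j)\<^sup>2 \<le> of_bool (x = j) + p j" for j
  proof -
    have "(1 - p j) * (1 - p j) \<le> 1" "p j * p j \<le> p j"
      using nonneg[of j] le1[of j] by (auto intro: mult_le_one mult_left_le)
    then show ?thesis using nonneg[of j] by (cases "x = j") (auto simp: power2_eq_square)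
  qed
  then have "(\<Sum>j\<in>UNIV. (of_bool (x = j) - p j)\<^sup>2) \<le> (\<Sum>j\<in>UNIV. of_bool (x = j) + p j)"
    by (rule sum_mono)
  also have "\<dots> = 2" using sum1 by (simp add: sum.distrib)
  finally show ?thesis .
qed

lemma row_col_of_vec:
  assumes "1 \<le> m" "m \<le> M"
  shows "row_of M (m + t * M) = m" "col_of M (m + t * M) = t"
proof -
  obtain m' where "m = Suc m'" using assms by (cases m) auto
  then show "row_of M (m + t * M) = m" "col_of M (m + t * M) = t"
    using assms by (simp_all add: row_of_def col_of_def)
qed

lemma row_col_of_bounds:
  assumes "1 \<le> k" "0 < M"
  shows "row_of M k \<in> {1..M}" "row_of M k + col_of M k * M = k"
  using assms by (auto simp: row_of_def col_of_def Suc_le_eq)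

lemma col_of_le:
  assumes "1 \<le> k" "k \<le> M * (T + 1)"
  shows "col_of M k \<le> T"
proof -
  have "0 < M" using assms by (cases M) auto
  moreover have "k - 1 < (T + 1) * M" using assms by (simp add: mult.commute)
  ultimately have "(k - 1) div M < T + 1" by (simp add: div_less_iff_less_mult)
  then show ?thesis by (simp add: col_of_def)
qed

lemma col_of_eq_0_iff:
  assumes "1 \<le> k" "0 < M"
  shows "col_of M k = 0 \<longleftrightarrow> k \<le> M"
  using assms by (auto simp: col_of_def div_eq_0_iff)

lemma Xbar_diff:
  assumes "0 < M" "M < k"
  shows "Xbar M X (k - M) = X (row_of M k) (col_of M k - 1)"
proof -
  have r: "1 \<le> row_of M k" "row_of M k \<le> M" and k: "row_of M k + col_of M k * M = k"
    using row_col_of_bounds[of k M] assms by auto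
  have "col_of M k \<noteq> 0" using col_of_eq_0_iff[of k M] assms by auto
  then have "k - M = row_of M k + (col_of M k - 1) * M" using k by (cases "col_of M k") auto
  then show ?thesis by (simp add: Xbar_def row_col_of_vec[OF r])
qed

lemma Xbar_vec: "1 \<le> r \<Longrightarrow> r \<le> M \<Longrightarrow> Xbar M X (r + s * M) = X r s"
  by (simp add: Xbar_def row_col_of_vec)

lemma ball_atLeastAtMost_vec:
  fixes M k :: nat
  assumes "0 < M"
  shows "(\<forall>j\<in>{1..k}. Q j) \<longleftrightarrow> (\<forall>r s. r \<in> {1..M} \<longrightarrow> r + s * M \<le> k \<longrightarrow> Q (r + s * M))"
proof
  assume "\<forall>r s. r \<in> {1..M} \<longrightarrow> r + s * M \<le> k \<longrightarrow> Q (r + s * M)"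
  then show "\<forall>j\<in>{1..k}. Q j"
    using row_col_of_bounds[of _ M] assms by (metis atLeastAtMost_iff)
qed auto

lemma Ubar_eq_0: "k \<le> M \<Longrightarrow> Ubar M P X k i j \<omega> = 0"
  by (auto simp: Ubar_def U_def col_of_def div_eq_0_iff)

lemma Ubar_eq:
  assumes "0 < M" "M < k"
  shows "Ubar M P X k i j \<omega> =
           of_bool (Xbar M X (k - M) \<omega> = i) * (of_bool (Xbar M X k \<omega> = j) - P (row_of M k) i j)"
  using assms col_of_eq_0_iff[of k M]
  by (simp add: Ubar_def U_def Xbar_diff[OF assms] Xbar_def[of M X k])

lemma Vbar_Suc: "Vbar M P X (Suc k) i j \<omega> = Vbar M P X k i j \<omega> + Ubar M P X (Suc k) i j \<omega>"
  by (simp add: Vbar_def)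

lemma space_Fk [simp]: "space (Fk N M X k) = space N"
  and sets_Fk: "sets (Fk N M X k) = sigma_sets (space N) (\<Union>j\<in>{1..k}. {Xbar M X j -` A \<inter> space N | A. True})"
  unfolding Fk_def by (auto intro!: space_measure_of sets_measure_of)

lemma sets_Fk_mono: "sets (Fk N M X k) \<subseteq> sets (Fk N M X (Suc k))"
  unfolding sets_Fk by (rule sigma_sets_mono') force

lemma measurable_Xbar_Fk:
  assumes "j \<in> {1..k}"
  shows "Xbar M X j \<in> measurable (Fk N M X k) (count_space UNIV)"
proof (rule measurableI)
  fix A
  have "Xbar M X j -` A \<inter> space N \<in> sigma_sets (space N) (\<Union>j\<in>{1..k}. {Xbar M X j -` A \<inter> space N | A. True})"
    using assms by blast
  then show "Xbar M X j -` A \<inter> space (Fk N M X k) \<in> sets (Fk N M X k)"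
    by (simp add: sets_Fk)
qed auto

lemma measurable_Ubar_Fk:
  assumes "0 < M" "1 \<le> k'" "k' \<le> k"
  shows "Ubar M P X k' i j \<in> borel_measurable (Fk N M X k)"
proof (cases "k' \<le> M")
  case False
  have "k' - M \<in> {1..k}" "k' \<in> {1..k}" using assms False by auto
  note [measurable] = measurable_Xbar_Fk[OF this(1)] measurable_Xbar_Fk[OF this(2)]
  show ?thesis
    unfolding Ubar_eq[OF assms(1) False[unfolded not_le], abs_def] by measurable
next
  case True
  then have "Ubar M P X k' i j = (\<lambda>_. 0)" by (simp add: fun_eq_iff Ubar_eq_0)
  then show ?thesis by simp
qed

lemma measurable_Vbar_Fk:
  "0 < M \<Longrightarrow> Vbar M P X k i j \<in> borel_measurable (Fk N M X k)"
  unfolding Vbar_def[abs_def] by (intro borel_measurable_sum measurable_Ubar_Fk) auto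

lemma abs_Ubar_le:
  "0 < M \<Longrightarrow> 1 \<le> k \<Longrightarrow> \<bar>Ubar M P X k i j \<omega>\<bar> \<le> 1 + \<bar>P (row_of M k) i j\<bar>"
  by (cases "k \<le> M") (auto simp: Ubar_eq_0 Ubar_eq abs_if)

locale markov_rows = prob_space Ps for Ps :: "'w measure" +
  fixes M T :: nat and X :: "nat \<Rightarrow> nat \<Rightarrow> 'w \<Rightarrow> 'a::finite" and P :: "nat \<Rightarrow> 'a \<Rightarrow> 'a \<Rightarrow> real"
  assumes M_pos: "0 < M"
    and measurable_X: "\<And>m t. m \<in> {1..M} \<Longrightarrow> t \<le> T \<Longrightarrow> X m t \<in> measurable Ps (count_space UNIV)"
    and indep_rows: "indep_vars (\<lambda>_. Pi\<^sub>M {..T} (\<lambda>_. count_space UNIV)) (\<lambda>m \<omega>. \<lambda>t\<in>{..T}. X m t \<omega>) {1..M}"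
    and markov: "\<And>m. m \<in> {1..M} \<Longrightarrow> markov_chain_row Ps (X m) (P m) T"
begin

abbreviation K :: nat where "K \<equiv> M * (T + 1)"

abbreviation history :: "nat \<Rightarrow> (nat \<Rightarrow> 'a) \<Rightarrow> 'w set" where
  "history k v \<equiv> atom (space Ps) (Xbar M X) {1..k} v"

definition row_history :: "nat \<Rightarrow> (nat \<Rightarrow> 'a) \<Rightarrow> nat \<Rightarrow> 'w set" where
  "row_history k v r = {\<omega>\<in>space Ps. \<forall>s\<in>{s. r + s * M \<le> k}. X r s \<omega> = v (r + s * M)}"

lemma measurable_Xbar: "j \<in> {1..K} \<Longrightarrow> Xbar M X j \<in> measurable Ps (count_space UNIV)"
  unfolding Xbar_def using measurable_X row_col_of_bounds[of j M] col_of_le[of j M T] M_pos by auto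

lemma sets_history: "k \<le> K \<Longrightarrow> history k v \<in> sets Ps"
  by (rule sets_atom) (auto intro: measurable_Xbar)

lemma subalgebra_Fk: "k \<le> K \<Longrightarrow> subalgebra Ps (Fk Ps M X k)"
  unfolding subalgebra_def sets_Fk space_Fk
proof (intro conjI refl sets.sigma_sets_subset subsetI)
  fix S assume "k \<le> K" "S \<in> (\<Union>j\<in>{1..k}. {Xbar M X j -` A \<inter> space Ps | A. True})"
  then obtain j A where "j \<in> {1..k}" "S = Xbar M X j -` A \<inter> space Ps" by auto
  with \<open>k \<le> K\<close> show "S \<in> sets Ps" using measurable_sets[OF measurable_Xbar] by simp
qed

lemma integrable_Ubar:
  assumes "1 \<le> k" "k \<le> K"
  shows "integrable Ps (Ubar M P X k i j)"
proof (rule integrable_const_bound[where B = "1 + \<bar>P (row_of M k) i j\<bar>"])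
  show "AE \<omega> in Ps. norm (Ubar M P X k i j \<omega>) \<le> 1 + \<bar>P (row_of M k) i j\<bar>"
    by (rule AE_I2) (simp add: abs_Ubar_le[OF M_pos assms(1)])
  show "Ubar M P X k i j \<in> borel_measurable Ps"
    using measurable_from_subalg[OF subalgebra_Fk measurable_Ubar_Fk[OF M_pos assms(1) order_refl]] assms
    by simp
qed

lemma integrable_Vbar:
  assumes "k \<le> K"
  shows "integrable Ps (Vbar M P X k i j)"
proof -
  have "integrable Ps (Ubar M P X k' i j)" if "k' \<in> {1..k}" for k'
    using that assms by (intro integrable_Ubar) auto
  then show ?thesis
    unfolding Vbar_def[abs_def] by (rule Bochner_Integration.integrable_sum)
qed

lemma prob_history:
  assumes "k \<le> K"
  shows "prob (history k v) = (\<Prod>r\<in>{1..M}. prob (row_history k v r))"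
proof -
  have "(\<forall>j\<in>{1..k}. Xbar M X j \<omega> = v j) \<longleftrightarrow>
        (\<forall>r\<in>{1..M}. \<forall>s\<in>{s. r + s * M \<le> k}. X r s \<omega> = v (r + s * M))" for \<omega>
    unfolding ball_atLeastAtMost_vec[OF M_pos, where k = k] by (auto simp: Xbar_vec)
  then have history:
    "history k v = {\<omega>\<in>space Ps. \<forall>r\<in>{1..M}. \<forall>s\<in>{s. r + s * M \<le> k}. X r s \<omega> = v (r + s * M)}"
    by (simp add: atom_def)
  have "{s. r + s * M \<le> k} \<subseteq> {..T}" if r: "r \<in> {1..M}" for r
  proof
    fix s assume "s \<in> {s. r + s * M \<le> k}"
    then have "col_of M (r + s * M) \<le> T" using col_of_le[of "r + s * M" M T] r assms by auto
    then show "s \<in> {..T}" using row_col_of_vec(2)[of r M s] r by auto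
  qed
  then show ?thesis
    unfolding history row_history_def by (intro prob_cylinder_indep_rows[OF indep_rows]) auto
qed

lemma row_history_Suc_other:
  assumes "Suc k = m + t * M" "m \<in> {1..M}" "r \<in> {1..M}" "r \<noteq> m"
  shows "row_history (Suc k) (v(Suc k := b)) r = row_history k v r"
proof -
  have "r + s * M \<noteq> Suc k" for s
    using assms row_col_of_vec(1)[of r M s] row_col_of_vec(1)[of m M t] by auto
  then show ?thesis by (auto simp: row_history_def le_Suc_eq)
qed

lemma row_history_Suc_same:
  assumes k: "Suc k = m + t * M" and m: "m \<in> {1..M}" and t: "1 \<le> t" "t \<le> T"
  shows "prob (row_history (Suc k) (v(Suc k := b)) m) = prob (row_history k v m) * P m (v (Suc k - M)) b"
proof -
  obtain t' where t': "t = Suc t'" using t by (cases t) auto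
  define xs where "xs s = (v(Suc k := b)) (m + s * M)" for s
  have le_Suc_k: "m + s * M \<le> Suc k \<longleftrightarrow> s \<le> t" for s
  proof -
    have "m + s * M \<le> Suc k \<longleftrightarrow> s * M \<le> t * M" using k by linarith
    also have "\<dots> \<longleftrightarrow> s \<le> t" using M_pos by simp
    finally show ?thesis .
  qed
  have le_k: "m + s * M \<le> k \<longleftrightarrow> s \<le> t'" for s
  proof -
    have "m + s * M \<le> k \<longleftrightarrow> s * M < t * M" using k by linarith
    also have "\<dots> \<longleftrightarrow> s < t" using M_pos by simp
    finally show ?thesis using t' by (simp add: less_Suc_eq_le)
  qed
  have xs_le_t': "xs s = v (m + s * M)" if "s \<le> t'" for s
    using le_k[of s] that by (simp add: xs_def)
  have "row_history (Suc k) (v(Suc k := b)) m = {\<omega>\<in>space Ps. \<forall>s\<le>t. X m s \<omega> = xs s}"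
    unfolding row_history_def le_Suc_k xs_def by simp
  also have "prob \<dots> = prob {\<omega>\<in>space Ps. \<forall>s\<le>t'. X m s \<omega> = xs s} * P m (xs t') (xs t)"
    using markov_chain_row_prob_extend[OF markov[OF m], of t' xs] t t' by simp
  also have "{\<omega>\<in>space Ps. \<forall>s\<le>t'. X m s \<omega> = xs s} = row_history k v m"
    unfolding row_history_def le_k using xs_le_t' by auto
  also have "xs t = b" using k by (simp add: xs_def)
  also have "xs t' = v (Suc k - M)" using xs_le_t'[of t'] k t' by simp
  finally show ?thesis .
qed

lemma prob_history_Suc:
  assumes "Suc k \<le> K" "M < Suc k"
  shows "prob (history (Suc k) (v(Suc k := b)))
       = prob (history k v) * P (row_of M (Suc k)) (v (Suc k - M)) b"
proof -
  define m t where "m = row_of M (Suc k)" "t = col_of M (Suc k)"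
  have mt: "Suc k = m + t * M" "m \<in> {1..M}" "1 \<le> t" "t \<le> T"
    using row_col_of_bounds[of "Suc k" M] col_of_le[of "Suc k" M T] col_of_eq_0_iff[of "Suc k" M]
      M_pos assms unfolding m_t_def by auto
  let ?v' = "v(Suc k := b)"
  have "prob (history (Suc k) ?v')
      = prob (row_history (Suc k) ?v' m) * (\<Prod>r\<in>{1..M} - {m}. prob (row_history (Suc k) ?v' r))"
    using prob_history[OF assms(1)] mt(2) by (simp add: prod.remove)
  also have "\<dots> = prob (row_history k v m) * P m (v (Suc k - M)) b
                  * (\<Prod>r\<in>{1..M} - {m}. prob (row_history k v r))"
    using row_history_Suc_same[OF mt] row_history_Suc_other[OF mt(1,2)] by simp
  also have "\<dots> = prob (history k v) * P m (v (Suc k - M)) b"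
    using prob_history[OF Suc_leD[OF assms(1)]] mt(2) by (simp add: prod.remove)
  finally show ?thesis by (simp add: m_t_def)
qed

lemma integral_Ubar_history:
  assumes "Suc k \<le> K"
  shows "(\<integral>\<omega>. indicator (history k v) \<omega> * Ubar M P X (Suc k) i j \<omega> \<partial>Ps) = 0"
proof (cases "Suc k \<le> M")
  case False
  define H H' where "H = history k v" and "H' = history (Suc k) (v(Suc k := j))"
  define c :: real and p where "c = of_bool (v (Suc k - M) = i)" and "p = P (row_of M (Suc k)) i j"
  have "Suc k - M \<in> {1..k}" using False M_pos by auto
  then have "indicator H \<omega> * Ubar M P X (Suc k) i j \<omega> = c * (indicator H' \<omega> - p * indicator H \<omega>)" for \<omega>
    using False M_pos
    by (auto simp: H_def H'_def c_def p_def Ubar_eq atom_def atLeastAtMostSuc_conv indicator_def)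
  moreover have "H \<in> sets Ps" "H' \<in> sets Ps" using assms sets_history unfolding H_def H'_def by auto
  moreover from this have "integrable Ps (indicator H :: 'w \<Rightarrow> real)" "integrable Ps (indicator H' :: 'w \<Rightarrow> real)"
    by (auto simp: top.not_eq_extremum[symmetric])
  ultimately have "(\<integral>\<omega>. indicator H \<omega> * Ubar M P X (Suc k) i j \<omega> \<partial>Ps) = c * (prob H' - p * prob H)"
    by simp
  also have "prob H' = prob H * P (row_of M (Suc k)) (v (Suc k - M)) j"
    unfolding H_def H'_def using prob_history_Suc assms False by simp
  finally show ?thesis by (simp add: H_def H'_def c_def p_def)
qed (simp add: Ubar_eq_0)

lemma integral_Ubar_Fk:
  assumes "Suc k \<le> K" "A \<in> sets (Fk Ps M X k)"
  shows "(\<integral>\<omega>. indicator A \<omega> * Ubar M P X (Suc k) i j \<omega> \<partial>Ps) = 0"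
proof (rule integral_indicator_zero_if_atoms)
  show "A \<in> sigma_sets (space Ps) (\<Union>j\<in>{1..k}. {Xbar M X j -` A \<inter> space Ps | A. True})"
    using assms(2) by (simp add: sets_Fk)
qed (use assms measurable_Xbar integrable_Ubar integral_Ubar_history in auto)

lemma martingale_Vbar: "martingale_upto Ps (Fk Ps M X) (\<lambda>k. Vbar M P X k i j) K"
  by (rule martingale_upto_of_increments)
    (simp_all add: subalgebra_Fk sets_Fk_mono measurable_Vbar_Fk M_pos integrable_Vbar
      Vbar_Suc integral_Ubar_Fk)

lemma norm_Ubar_le_sqrt_2:
  assumes "k \<in> {1..K}"
  shows "sqrt (\<Sum>j\<in>UNIV. (Ubar M P X k i j \<omega>)\<^sup>2) \<le> sqrt 2"
proof -
  have "(\<Sum>j\<in>UNIV. (Ubar M P X k i j \<omega>)\<^sup>2) \<le> 2"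
  proof (cases "M < k \<and> Xbar M X (k - M) \<omega> = i")
    case True
    then have Ubar: "Ubar M P X k i j \<omega> = of_bool (Xbar M X k \<omega> = j) - P (row_of M k) i j" for j
      using Ubar_eq[OF M_pos, of k P X i j \<omega>] by simp
    have "markov_chain_row Ps (X (row_of M k)) (P (row_of M k)) T"
      using markov row_col_of_bounds[of k M] M_pos assms by auto
    then have "(\<Sum>j\<in>UNIV. (of_bool (Xbar M X k \<omega> = j) - P (row_of M k) i j)\<^sup>2) \<le> 2"
      unfolding markov_chain_row_def by (intro sum_square_delta_minus_distribution_le_2) auto
    then show ?thesis by (simp add: Ubar)
  next
    case False
    then have "Ubar M P X k i j \<omega> = 0" for j
      using Ubar_eq_0[of k M P X i j \<omega>] Ubar_eq[OF M_pos, of k P X i j \<omega>] by (cases "M < k") auto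
    then show ?thesis by simp
  qed
  then show ?thesis by simp
qed

end

theorem lemma6p5:
  fixes Ps :: "'w measure"
    and M T :: nat
    and X :: "nat \<Rightarrow> nat \<Rightarrow> 'w \<Rightarrow> 'a::finite"
    and P :: "nat \<Rightarrow> 'a \<Rightarrow> 'a \<Rightarrow> real"
    and i :: 'a
  assumes "prob_space Ps"
    and "M \<ge> 1" and "T \<ge> 1"
    and meas: "\<forall>m\<in>{1..M}. \<forall>t\<le>T. X m t \<in> measurable Ps (count_space UNIV)"
    and indep: "prob_space.indep_vars Ps (\<lambda>_. Pi\<^sub>M {..T} (\<lambda>_. count_space UNIV))
                  (\<lambda>m \<omega>. \<lambda>t\<in>{..T}. X m t \<omega>) {1..M}"
    and markov: "\<forall>m\<in>{1..M}. markov_chain_row Ps (X m) (P m) T"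
  shows "vec_martingale_upto Ps (Fk Ps M X) (\<lambda>k j. Vbar M P X k i j) (M * (T + 1))
         \<and> (\<forall>k\<in>{1..M * (T + 1)}.
              AE \<omega> in Ps. sqrt (\<Sum>j\<in>UNIV. (Ubar M P X k i j \<omega>)\<^sup>2) \<le> sqrt 2)"
proof -
  interpret markov_rows Ps M T X P
    using assms by (simp add: markov_rows_def markov_rows_axioms_def)
  show ?thesis
    unfolding vec_martingale_upto_def using martingale_Vbar norm_Ubar_le_sqrt_2 by (auto intro: AE_I2)
qed

end
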